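(* Let $\phi:\mathbb{N}_0\to\mathbb{N}_0$ satisfy $\phi(0)=0$ and $\phi(x)\neq x$ for all $x\in\mathbb{N}$, and let $n\ge2$. Assume the local function $\phi_n$ has no cycle. Let $p_\nu=|\{x\in D_n: h(x)=\nu\}|$ for $1\le\nu\le n$, let $m=\max\{\nu\in\{1,\dots,n\}: p_\nu\ge1\}$, and $\pi=(p_1,\dots,p_m)$. Then $\pi$ is an ordered partition (composition) of $n$ of length $m$, $1\le m\le n$, with $p_1,\dots,p_m\ge1$. Moreover: (1) $M_n(\phi)$ is nilpotent of degree $m$. (2) For $1\le k\le m$, \[ M_n(\phi)^k=\sum_{x\in D_n:\ \phi_n^k(x)\in D_n} E_n(\phi_n^k(x),x),\qquad \#M_n(\phi)^k=n-\sum_{\nu=1}^k p_\nu. \] (3) Writing $\widehat{M}_n(\phi)^{-1}=(\mathbf{v}_1,\dots,\mathbf{v}_n)$ by columns, we have $\mathbf{v}_j=\mathbf{e}_j+\sum_{\nu=1}^{h(j)-1}\mathbf{e}_{\phi_n^\nu(j)}$ for $1\le j\le n$, and \[ \#\widehat{M}_n(\phi)^{-1}=\sum_{x\in D_n}h(x)=\sum_{\nu=1}^m\nu p_\nu\le nm-\binom{m}{2}. \]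
   Context: $\mathbb{N}=\{1,2,\dots\}$, $\mathbb{N}_0=\mathbb{N}\cup\{0\}$, $D_n=\{1,\dots,n\}$, $D_{n,0}=D_n\cup\{0\}$. The local function $\phi_n:D_{n,0}\to D_{n,0}$ is $\phi_n(x)=\phi(x)$ if $x\in D_n$ and $\phi(x)\in D_n$, and $\phi_n(x)=0$ otherwise. "$\phi_n$ has no cycle" means there are no $m\ge2$ and $x\in D_n$ with $\phi_n^m(x)=x$. The height of $x\in D_n$ is $h(x)=\min\{k\in\mathbb{N}:\phi_n^k(x)=0\}$. For $1\le i\le n$, $\mathbf{e}_i$ is the $i$-th unit vector in $\mathbb{Z}^n$ and $\mathbf{e}_0$ the zero vector; $E_n(i,j)=\mathbf{e}_i\mathbf{e}_j^t$. $M_n(\phi)$ is the $n\times n$ matrix whose $j$-th column is $\mathbf{e}_{\phi_n(j)}$, and $\widehat{M}_n(\phi)=I-M_n(\phi)$. $\#A$ denotes the number of nonzero entries of a matrix $A$. A matrix $A$ is nilpotent of degree $k$ if $A^k=0$ and $A^{k-1}\ne0$. *)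

theory Defs
  imports "Jordan_Normal_Form.Matrix"
begin

text \<open>Conventions: entries of the n x n integer matrices are indexed 0..n-1 in the library;
  the paper's index i in D_n = {1..n} corresponds to library index i - 1.\<close>

definition Dn :: "nat \<Rightarrow> nat set" where
  "Dn n = {1..n}"

definition loc :: "(nat \<Rightarrow> nat) \<Rightarrow> nat \<Rightarrow> nat \<Rightarrow> nat" where
  "loc \<phi> n x = (if x \<in> Dn n \<and> \<phi> x \<in> Dn n then \<phi> x else 0)"

definition no_cycle :: "(nat \<Rightarrow> nat) \<Rightarrow> nat \<Rightarrow> bool" where
  "no_cycle \<phi> n \<longleftrightarrow> \<not> (\<exists>m\<ge>2. \<exists>x\<in>Dn n. (loc \<phi> n ^^ m) x = x)"

definition height :: "(nat \<Rightarrow> nat) \<Rightarrow> nat \<Rightarrow> nat \<Rightarrow> nat" where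
  "height \<phi> n x = (LEAST k. k \<ge> 1 \<and> (loc \<phi> n ^^ k) x = 0)"

text \<open>Unit vector e_i in Z^n (i in D_n); e_0 is the zero vector.\<close>
definition uvec :: "nat \<Rightarrow> nat \<Rightarrow> int vec" where
  "uvec n i = vec n (\<lambda>r. if i \<ge> 1 \<and> r = i - 1 then 1 else 0)"

definition Emat :: "nat \<Rightarrow> nat \<Rightarrow> nat \<Rightarrow> int mat" where
  "Emat n i j = mat n n (\<lambda>(r, c). (uvec n i $ r) * (uvec n j $ c))"

definition Mmat :: "(nat \<Rightarrow> nat) \<Rightarrow> nat \<Rightarrow> int mat" where
  "Mmat \<phi> n = mat n n (\<lambda>(r, c). uvec n (loc \<phi> n (c + 1)) $ r)"

definition Mhat :: "(nat \<Rightarrow> nat) \<Rightarrow> nat \<Rightarrow> int mat" where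
  "Mhat \<phi> n = 1\<^sub>m n - Mmat \<phi> n"

definition nnz :: "int mat \<Rightarrow> nat" where
  "nnz A = card {(r, c). r < dim_row A \<and> c < dim_col A \<and> A $$ (r, c) \<noteq> 0}"

definition nilpotent_deg :: "int mat \<Rightarrow> nat \<Rightarrow> bool" where
  "nilpotent_deg A k \<longleftrightarrow> A ^\<^sub>m k = 0\<^sub>m (dim_row A) (dim_col A)
      \<and> A ^\<^sub>m (k - 1) \<noteq> 0\<^sub>m (dim_row A) (dim_col A)"

definition msum :: "nat \<Rightarrow> ('b \<Rightarrow> int mat) \<Rightarrow> 'b set \<Rightarrow> int mat" where
  "msum n f S = finprod (monoid_mat TYPE(int) n n) f S"

definition vsum :: "nat \<Rightarrow> ('b \<Rightarrow> int vec) \<Rightarrow> 'b set \<Rightarrow> int vec" where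
  "vsum n f S = finsum_vec TYPE(int) n f S"

end

theory Submission
  imports Defs
begin

text \<open>
  \<open>M\<^sub>n(\<phi>)\<close> is the matrix of the self-map \<open>\<phi>\<^sub>n\<close> of \<open>D\<^sub>n \<union> {0}\<close> (with \<open>e\<^sub>0 = 0\<close>), and
  such matrices multiply like the maps compose; hence \<open>M\<^sub>n(\<phi>)\<^sup>k\<close> is the matrix of
  \<open>\<phi>\<^sub>n\<^sup>k\<close>, whose column \<open>j\<close> is nonzero exactly when \<open>k < h(j)\<close>. Without fixed points
  or cycles every path \<open>j, \<phi>\<^sub>n(j), \<phi>\<^sub>n\<^sup>2(j), \<dots>\<close> consists of distinct points of \<open>D\<^sub>n\<close> until it
  falls into \<open>0\<close>, so heights are at most \<open>n\<close>, and from a point of maximal height \<open>m\<close>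
  every height \<open>1, \<dots>, m\<close> is visited. The inverse of \<open>I - M\<^sub>n(\<phi>)\<close> is the finite
  geometric series \<open>\<Sum>k<m. M\<^sub>n(\<phi>)\<^sup>k\<close>, whose column \<open>j\<close> is the indicator of the
  \<open>h(j)\<close> distinct points of the path from \<open>j\<close>. The final bound holds for every
  composition of \<open>n\<close> with \<open>m\<close> positive parts.
\<close>

lemma weighted_composition_sum_le:
  fixes p :: "nat \<Rightarrow> nat"
  assumes p_pos: "\<And>\<nu>. \<nu> \<in> {1..m} \<Longrightarrow> 1 \<le> p \<nu>" and sum_p: "(\<Sum>\<nu>=1..m. p \<nu>) = n"
  shows "(\<Sum>\<nu>=1..m. \<nu> * p \<nu>) \<le> n * m - (m choose 2)"
proof -
  define q where "q = (\<Sum>\<nu>=1..m. p \<nu> - 1)"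
  have "q + (\<Sum>\<nu>=1..m. 1) = n"
    unfolding q_def sum.distrib[symmetric] sum_p[symmetric] using p_pos
    by (intro sum.cong) (auto simp: Suc_le_eq)
  then have q: "q + m = n" by simp
  have triangle: "(\<Sum>\<nu>=1..k. \<nu>) + (k choose 2) = k * k" for k :: nat
    by (induction k) (simp_all add: numeral_2_eq_2)
  have "(\<Sum>\<nu>=1..m. \<nu> * p \<nu>) = (\<Sum>\<nu>=1..m. \<nu> * (p \<nu> - 1)) + (\<Sum>\<nu>=1..m. \<nu>)"
  proof -
    have "\<nu> * p \<nu> = \<nu> * (p \<nu> - 1) + \<nu>" if "\<nu> \<in> {1..m}" for \<nu>
      using p_pos[OF that] by (cases "p \<nu>") simp_all
    then show ?thesis by (simp add: sum.distrib[symmetric])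
  qed
  also have "(\<Sum>\<nu>=1..m. \<nu> * (p \<nu> - 1)) \<le> (\<Sum>\<nu>=1..m. m * (p \<nu> - 1))"
    by (intro sum_mono) simp
  also have "\<dots> = m * q"
    unfolding q_def by (simp flip: sum_distrib_left)
  finally have "(\<Sum>\<nu>=1..m. \<nu> * p \<nu>) + (m choose 2) \<le> m * q + m * m"
    using triangle[of m] by linarith
  also have "\<dots> = n * m"
    using q by (simp flip: add_mult_distrib2 add: mult.commute)
  finally show ?thesis by linarith
qed

lemma uvec_index: "r < n \<Longrightarrow> uvec n i $ r = of_bool (i = r + 1)"
  unfolding uvec_def by auto

lemma uvec_carrier: "uvec n i \<in> carrier_vec n"
  unfolding uvec_def by simp

lemma Emat_index: "r < n \<Longrightarrow> c < n \<Longrightarrow> Emat n i j $$ (r, c) = of_bool (i = r + 1 \<and> j = c + 1)"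
  unfolding Emat_def by (simp add: uvec_index)

lemma Emat_carrier: "Emat n i j \<in> carrier_mat n n"
  unfolding Emat_def by simp

lemma msum_empty: "msum n f {} = 0\<^sub>m n n"
  unfolding msum_def comm_monoid.finprod_empty[OF comm_monoid_mat] by (simp add: monoid_mat_def)

lemma msum_insert:
  assumes "finite S" "x \<notin> S" "f x \<in> carrier_mat n n" "\<forall>y\<in>S. f y \<in> carrier_mat n n"
  shows "msum n f (insert x S) = f x + msum n f S"
  unfolding msum_def using assms
  by (subst comm_monoid.finprod_insert[OF comm_monoid_mat]) (auto simp: monoid_mat_def)

lemma msum_carrier_index:
  assumes "finite S" "\<forall>x\<in>S. f x \<in> carrier_mat n n"
  shows "msum n f S \<in> carrier_mat n n \<and>
    (\<forall>r c. r < n \<longrightarrow> c < n \<longrightarrow> msum n f S $$ (r, c) = (\<Sum>x\<in>S. f x $$ (r, c)))"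
  using assms by (induction S rule: finite_induct) (auto simp: msum_empty msum_insert)

lemma msum_carrier:
  "finite S \<Longrightarrow> \<forall>x\<in>S. f x \<in> carrier_mat n n \<Longrightarrow> msum n f S \<in> carrier_mat n n"
  using msum_carrier_index by blast

lemma index_msum:
  "finite S \<Longrightarrow> \<forall>x\<in>S. f x \<in> carrier_mat n n \<Longrightarrow> r < n \<Longrightarrow> c < n \<Longrightarrow>
    msum n f S $$ (r, c) = (\<Sum>x\<in>S. f x $$ (r, c))"
  using msum_carrier_index by blast

lemma msum_mult_distrib_left:
  assumes "finite S" and A: "A \<in> carrier_mat n n" and "\<forall>x\<in>S. f x \<in> carrier_mat n n"
  shows "A * msum n f S = msum n (\<lambda>x. A * f x) S"
  using assms(1,3)
proof (induction S rule: finite_induct)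
  case (insert x S)
  then have fx: "f x \<in> carrier_mat n n" and fS: "\<forall>y\<in>S. f y \<in> carrier_mat n n" by auto
  have "A * msum n f (insert x S) = A * f x + A * msum n f S"
    using insert fx fS A by (simp add: msum_insert mult_add_distrib_mat[OF A] msum_carrier)
  also have "\<dots> = msum n (\<lambda>x. A * f x) (insert x S)"
    using insert fx fS A by (simp add: msum_insert)
  finally show ?case .
qed (use A in \<open>simp add: msum_empty\<close>)

lemma msum_mult_distrib_right:
  assumes "finite S" and A: "A \<in> carrier_mat n n" and "\<forall>x\<in>S. f x \<in> carrier_mat n n"
  shows "msum n f S * A = msum n (\<lambda>x. f x * A) S"
  using assms(1,3)
proof (induction S rule: finite_induct)
  case (insert x S)
  then have fx: "f x \<in> carrier_mat n n" and fS: "\<forall>y\<in>S. f y \<in> carrier_mat n n" by auto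
  have "msum n f (insert x S) * A = f x * A + msum n f S * A"
    using insert fx fS A by (simp add: msum_insert add_mult_distrib_mat[OF fx _ A] msum_carrier)
  also have "\<dots> = msum n (\<lambda>x. f x * A) (insert x S)"
    using insert fx fS by (subst msum_insert) (auto intro: mult_carrier_mat[OF _ A])
  finally show ?case .
qed (use A in \<open>simp add: msum_empty\<close>)

lemma msum_telescope:
  assumes f: "\<And>k. f k \<in> carrier_mat n n"
  shows "msum n f {..<m} - msum n (\<lambda>k. f (Suc k)) {..<m} = f 0 - f m"
proof -
  have fin: "finite {..<m}" and car: "\<forall>k\<in>{..<m}. f k \<in> carrier_mat n n"
    "\<forall>k\<in>{..<m}. f (Suc k) \<in> carrier_mat n n" using f by auto
  note sums = msum_carrier[OF fin car(1)] msum_carrier[OF fin car(2)]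
  show ?thesis
  proof (rule eq_matI)
    fix r c assume "r < dim_row (f 0 - f m)" "c < dim_col (f 0 - f m)"
    then have rc: "r < n" "c < n" using f[of 0] f[of m] by auto
    have "(msum n f {..<m} - msum n (\<lambda>k. f (Suc k)) {..<m}) $$ (r, c)
        = (\<Sum>k<m. f k $$ (r, c)) - (\<Sum>k<m. f (Suc k) $$ (r, c))"
      using rc sums index_msum[OF fin car(1) rc] index_msum[OF fin car(2) rc] by simp
    also have "\<dots> = f 0 $$ (r, c) - f m $$ (r, c)"
      unfolding sum_subtractf[symmetric] by (rule sum_lessThan_telescope')
    finally show "(msum n f {..<m} - msum n (\<lambda>k. f (Suc k)) {..<m}) $$ (r, c) = (f 0 - f m) $$ (r, c)"
      using rc f[of 0] f[of m] by simp
  qed (use f[of 0] f[of m] sums in auto)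
qed

lemma pow_mat_Suc_left:
  assumes A: "A \<in> carrier_mat n n" shows "A ^\<^sub>m Suc k = A * A ^\<^sub>m k"
proof (induction k)
  case (Suc k)
  have "A ^\<^sub>m Suc (Suc k) = (A * A ^\<^sub>m k) * A" using Suc by simp
  also have "\<dots> = A * A ^\<^sub>m Suc k" using A by (simp add: assoc_mult_mat[of A n n _ n _ n])
  finally show ?case .
qed (use A in simp)

lemma one_minus_mult_geometric_sum:
  fixes A :: "int mat" and m :: nat
  assumes A: "A \<in> carrier_mat n n"
  defines "S \<equiv> msum n (\<lambda>k. A ^\<^sub>m k) {..<m}"
  shows "(1\<^sub>m n - A) * S = 1\<^sub>m n - A ^\<^sub>m m" and "S * (1\<^sub>m n - A) = 1\<^sub>m n - A ^\<^sub>m m"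
proof -
  have S: "S \<in> carrier_mat n n" unfolding S_def using A by (simp add: msum_carrier)
  have "A * S = msum n (\<lambda>k. A ^\<^sub>m Suc k) {..<m}"
    unfolding S_def using A
    by (simp add: msum_mult_distrib_left pow_mat_Suc_left[OF A, symmetric] del: pow_mat.simps)
  moreover have "S * A = msum n (\<lambda>k. A ^\<^sub>m Suc k) {..<m}"
    unfolding S_def using A by (simp add: msum_mult_distrib_right)
  moreover have "S - msum n (\<lambda>k. A ^\<^sub>m Suc k) {..<m} = 1\<^sub>m n - A ^\<^sub>m m"
    unfolding S_def using A msum_telescope[of "\<lambda>k. A ^\<^sub>m k" n m] by simp
  ultimately show "(1\<^sub>m n - A) * S = 1\<^sub>m n - A ^\<^sub>m m" "S * (1\<^sub>m n - A) = 1\<^sub>m n - A ^\<^sub>m m"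
    using A S by (simp_all add: minus_mult_distrib_mat[OF one_carrier_mat A S]
      mult_minus_distrib_mat[OF S one_carrier_mat A])
qed

definition fun_mat :: "nat \<Rightarrow> (nat \<Rightarrow> nat) \<Rightarrow> int mat" where
  "fun_mat n f = mat n n (\<lambda>(r, c). of_bool (f (c + 1) = r + 1))"

lemma dim_fun_mat [simp]: "dim_row (fun_mat n f) = n" "dim_col (fun_mat n f) = n"
  unfolding fun_mat_def by simp_all

lemma fun_mat_carrier [simp]: "fun_mat n f \<in> carrier_mat n n"
  unfolding fun_mat_def by simp

lemma index_fun_mat [simp]:
  "r < n \<Longrightarrow> c < n \<Longrightarrow> fun_mat n f $$ (r, c) = of_bool (f (c + 1) = r + 1)"
  unfolding fun_mat_def by simp

lemma Mmat_eq_fun_mat: "Mmat \<phi> n = fun_mat n (loc \<phi> n)"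
  unfolding Mmat_def fun_mat_def by (rule eq_matI) (auto simp: uvec_index)

lemma one_mat_eq_fun_mat: "1\<^sub>m n = fun_mat n id"
  by (rule eq_matI) auto

lemma fun_mat_mult:
  assumes f0: "f 0 = 0" and g: "\<forall>x\<in>Dn n. g x \<le> n"
  shows "fun_mat n f * fun_mat n g = fun_mat n (f \<circ> g)"
proof (rule eq_matI)
  fix r c assume "r < dim_row (fun_mat n (f \<circ> g))" "c < dim_col (fun_mat n (f \<circ> g))"
  then have r: "r < n" and c: "c < n" by auto
  have "(fun_mat n f * fun_mat n g) $$ (r, c)
      = (\<Sum>s<n. of_bool (f (s + 1) = r + 1) * of_bool (g (c + 1) = s + 1))"
    using r c by (simp add: scalar_prod_def atLeast0LessThan)
  also have "\<dots> = of_bool (f (g (c + 1)) = r + 1)"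
  proof (cases "g (c + 1)")
    case 0
    then show ?thesis using f0 by simp
  next
    case (Suc t)
    then have "t < n" using g[rule_format, of "c + 1"] c by (simp add: Dn_def)
    have "(\<Sum>s<n. of_bool (f (s + 1) = r + 1) * of_bool (g (c + 1) = s + 1))
        = (\<Sum>s<n. if s = t then of_bool (f (t + 1) = r + 1) else (0::int))"
      using Suc by (intro sum.cong) auto
    then show ?thesis using Suc \<open>t < n\<close> by simp
  qed
  finally show "(fun_mat n f * fun_mat n g) $$ (r, c) = fun_mat n (f \<circ> g) $$ (r, c)"
    using r c by simp
qed auto

lemma fun_mat_pow:
  assumes "f 0 = 0" and "\<forall>x\<in>Dn n. f x \<le> n"
  shows "fun_mat n f ^\<^sub>m k = fun_mat n (f ^^ k)"
proof (induction k)
  case 0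
  show ?case by (simp add: one_mat_eq_fun_mat id_def)
next
  case (Suc k)
  have "(f ^^ k) 0 = 0" using assms(1) by (induction k) simp_all
  then show ?case
    using Suc assms(2) by (simp add: fun_mat_mult funpow_Suc_right comp_def del: funpow.simps)
qed

lemma fun_mat_eq_msum_Emat:
  "fun_mat n f = msum n (\<lambda>x. Emat n (f x) x) {x \<in> Dn n. f x \<in> Dn n}"
proof -
  let ?S = "{x \<in> Dn n. f x \<in> Dn n}"
  have fin: "finite ?S" and car: "\<forall>x\<in>?S. Emat n (f x) x \<in> carrier_mat n n"
    by (auto simp: Dn_def Emat_carrier)
  show ?thesis
  proof (rule eq_matI)
    fix r c assume "r < dim_row (msum n (\<lambda>x. Emat n (f x) x) ?S)"
      "c < dim_col (msum n (\<lambda>x. Emat n (f x) x) ?S)"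
    then have rc: "r < n" "c < n" using msum_carrier[OF fin car] by auto
    have "msum n (\<lambda>x. Emat n (f x) x) ?S $$ (r, c) = (\<Sum>x\<in>?S. of_bool (f x = r + 1 \<and> x = c + 1))"
      using rc by (simp add: index_msum[OF fin car] Emat_index)
    also have "\<dots> = (\<Sum>x\<in>?S. if x = c + 1 then of_bool (f (c + 1) = r + 1) else 0)"
      by (intro sum.cong) auto
    also have "\<dots> = of_bool (f (c + 1) = r + 1)"
      using rc fin by (auto simp: sum.delta' Dn_def)
    finally show "fun_mat n f $$ (r, c) = msum n (\<lambda>x. Emat n (f x) x) ?S $$ (r, c)"
      using rc by simp
  qed (use msum_carrier[OF fin car] in auto)
qed

lemma nonzero_entries_fun_mat:
  "{(r, c). r < n \<and> c < n \<and> fun_mat n f $$ (r, c) \<noteq> 0}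
    = (\<lambda>x. (f x - 1, x - 1)) ` {x \<in> Dn n. f x \<in> Dn n}"
proof (intro equalityI subsetI)
  fix rc assume "rc \<in> {(r, c). r < n \<and> c < n \<and> fun_mat n f $$ (r, c) \<noteq> 0}"
  then obtain r c where "rc = (r, c)" "r < n" "c < n" "f (c + 1) = r + 1" by auto
  then show "rc \<in> (\<lambda>x. (f x - 1, x - 1)) ` {x \<in> Dn n. f x \<in> Dn n}"
    by (intro image_eqI[of _ _ "c + 1"]) (auto simp: Dn_def)
qed (auto simp: Dn_def)

lemma nnz_fun_mat: "nnz (fun_mat n f) = card {x \<in> Dn n. f x \<in> Dn n}"
proof -
  have "inj_on (\<lambda>x. (f x - 1, x - 1)) (Dn n)"
    by (auto simp: inj_on_def Dn_def)
  then show ?thesis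
    unfolding nnz_def using nonzero_entries_fun_mat[of n f]
    by (simp add: card_image inj_on_subset[of _ "Dn n"])
qed

lemma fun_mat_eq_zero_iff: "fun_mat n f = 0\<^sub>m n n \<longleftrightarrow> (\<forall>x\<in>Dn n. f x \<notin> Dn n)"
proof
  assume zero: "fun_mat n f = 0\<^sub>m n n"
  show "\<forall>x\<in>Dn n. f x \<notin> Dn n"
  proof (intro ballI notI)
    fix x assume "x \<in> Dn n" "f x \<in> Dn n"
    then have "fun_mat n f $$ (f x - 1, x - 1) = 1" by (auto simp: Dn_def)
    with zero \<open>x \<in> Dn n\<close> \<open>f x \<in> Dn n\<close> show False by (auto simp: Dn_def)
  qed
next
  assume none: "\<forall>x\<in>Dn n. f x \<notin> Dn n"
  show "fun_mat n f = 0\<^sub>m n n"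
  proof (rule eq_matI)
    fix r c assume "r < dim_row (0\<^sub>m n n :: int mat)" "c < dim_col (0\<^sub>m n n :: int mat)"
    then show "fun_mat n f $$ (r, c) = 0\<^sub>m n n $$ (r, c)"
      using none[rule_format, of "c + 1"] by (auto simp: Dn_def)
  qed auto
qed

lemma finite_Dn: "finite (Dn n)"
  unfolding Dn_def by simp

lemma card_Dn: "card (Dn n) = n"
  unfolding Dn_def by simp

lemma loc_0 [simp]: "loc \<phi> n 0 = 0"
  unfolding loc_def Dn_def by simp

lemma loc_cases: "loc \<phi> n x = 0 \<or> loc \<phi> n x \<in> Dn n"
  unfolding loc_def by simp

lemma loc_le: "loc \<phi> n x \<le> n"
  using loc_cases[of \<phi> n x] by (auto simp: Dn_def)

lemma funpow_loc_0 [simp]: "(loc \<phi> n ^^ k) 0 = 0"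
  by (induction k) simp_all

lemma funpow_loc_cases:
  fixes \<phi> :: "nat \<Rightarrow> nat"
  assumes "x \<in> Dn n" shows "(loc \<phi> n ^^ k) x = 0 \<or> (loc \<phi> n ^^ k) x \<in> Dn n"
  using assms by (cases k) (simp_all add: loc_cases)

locale acyclic_loc =
  fixes \<phi> :: "nat \<Rightarrow> nat" and n :: nat
  assumes nofix: "\<forall>x\<ge>1. \<phi> x \<noteq> x"
    and nocyc: "no_cycle \<phi> n"
    and n_pos: "0 < n"
begin

abbreviation L :: "nat \<Rightarrow> nat" where "L \<equiv> loc \<phi> n"
abbreviation h :: "nat \<Rightarrow> nat" where "h \<equiv> height \<phi> n"

lemma no_periodic_point:
  assumes x: "x \<in> Dn n" and k: "0 < k" shows "(L ^^ k) x \<noteq> x"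
proof
  assume per: "(L ^^ k) x = x"
  show False
  proof (cases "k = 1")
    case True
    then have "L x = x" using per by simp
    then show False using nofix x unfolding loc_def Dn_def by (auto split: if_splits)
  next
    case False
    then show False using nocyc x k per unfolding no_cycle_def by force
  qed
qed

lemma funpow_loc_neq:
  assumes x: "x \<in> Dn n" and ij: "i < j" and nz: "(L ^^ i) x \<noteq> 0"
  shows "(L ^^ j) x \<noteq> (L ^^ i) x"
proof -
  have y: "(L ^^ i) x \<in> Dn n" using funpow_loc_cases[OF x, where \<phi>=\<phi> and k=i] nz by simp
  have "(L ^^ j) x = (L ^^ (j - i)) ((L ^^ i) x)"
    using ij by (simp flip: funpow_add comp_apply[of "L ^^ _" "L ^^ _"])
  then show ?thesis using no_periodic_point[OF y] ij by simp
qed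

text \<open>Pigeonhole: the \<open>n + 1\<close> points of a path of length \<open>n\<close> avoiding \<open>0\<close> cannot be distinct in \<open>D\<^sub>n\<close>.\<close>
lemma reaches_zero:
  assumes x: "x \<in> Dn n" shows "\<exists>k\<in>{1..n}. (L ^^ k) x = 0"
proof (rule ccontr)
  assume "\<not> ?thesis"
  then have nz: "(L ^^ k) x \<noteq> 0" if "k \<le> n" for k
    using that x by (cases "k = 0") (auto simp: Dn_def)
  have "(\<lambda>k. (L ^^ k) x) ` {0..n} \<subseteq> Dn n"
  proof (rule image_subsetI)
    fix k assume "k \<in> {0..n}"
    then show "(L ^^ k) x \<in> Dn n" using nz[of k] funpow_loc_cases[OF x, where \<phi>=\<phi> and k=k] by auto
  qed
  moreover have "inj_on (\<lambda>k. (L ^^ k) x) {0..n}"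
    by (intro inj_onI, rule ccontr) (metis atLeastAtMost_iff funpow_loc_neq[OF x] nat_neq_iff nz)
  ultimately have "card {0..n} \<le> card (Dn n)"
    by (intro card_inj_on_le) (auto simp: Dn_def)
  then show False by (simp add: Dn_def)
qed

lemma
  assumes x: "x \<in> Dn n"
  shows height_ge_1: "1 \<le> h x" and height_le: "h x \<le> n"
    and funpow_loc_eq_0_iff: "(L ^^ k) x = 0 \<longleftrightarrow> h x \<le> k"
proof -
  obtain k0 where k0: "k0 \<in> {1..n}" "(L ^^ k0) x = 0" using reaches_zero[OF x] by blast
  have least: "1 \<le> h x \<and> (L ^^ h x) x = 0"
    unfolding height_def by (rule LeastI[of _ k0]) (use k0 in auto)
  show "1 \<le> h x" using least by simp
  show "h x \<le> n" unfolding height_def by (rule order_trans[OF Least_le]) (use k0 in auto)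
  show "(L ^^ k) x = 0 \<longleftrightarrow> h x \<le> k"
  proof
    assume k: "(L ^^ k) x = 0"
    then have "k \<noteq> 0" using x by (cases k) (auto simp: Dn_def)
    with k show "h x \<le> k" unfolding height_def by (intro Least_le) simp
  next
    assume "h x \<le> k"
    then have "(L ^^ k) x = (L ^^ (k - h x)) ((L ^^ h x) x)"
      by (simp flip: funpow_add comp_apply[of "L ^^ _" "L ^^ _"])
    then show "(L ^^ k) x = 0" using least by simp
  qed
qed

lemma funpow_loc_in_Dn_iff: "x \<in> Dn n \<Longrightarrow> (L ^^ k) x \<in> Dn n \<longleftrightarrow> k < h x"
  using funpow_loc_cases[where \<phi>=\<phi> and k=k and x=x and n=n] funpow_loc_eq_0_iff[of x k] by (auto simp: Dn_def)

lemma height_funpow: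
  assumes x: "x \<in> Dn n" and i: "i < h x"
  shows "h ((L ^^ i) x) = h x - i"
proof -
  have y: "(L ^^ i) x \<in> Dn n" using funpow_loc_in_Dn_iff[OF x] i by simp
  have "h ((L ^^ i) x) \<le> k \<longleftrightarrow> h x - i \<le> k" for k
    using funpow_loc_eq_0_iff[OF y, of k] funpow_loc_eq_0_iff[OF x, of "k + i"]
    by (simp add: funpow_add) linarith
  then show ?thesis by (metis le_antisym order_refl)
qed

definition orbit :: "nat \<Rightarrow> nat set" where
  "orbit x = (\<lambda>k. (L ^^ k) x) ` {..<h x}"

lemma orbit_subset: "x \<in> Dn n \<Longrightarrow> orbit x \<subseteq> Dn n"
  unfolding orbit_def using funpow_loc_in_Dn_iff by auto

lemma card_orbit:
  assumes x: "x \<in> Dn n" shows "card (orbit x) = h x"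
proof -
  have "inj_on (\<lambda>k. (L ^^ k) x) {..<h x}"
  proof (intro inj_onI, rule ccontr)
    fix i j assume ij: "i \<in> {..<h x}" "j \<in> {..<h x}" "(L ^^ i) x = (L ^^ j) x" "i \<noteq> j"
    then have "(L ^^ i) x \<noteq> 0" "(L ^^ j) x \<noteq> 0" using funpow_loc_eq_0_iff[OF x] by auto
    then show False using ij funpow_loc_neq[OF x] by (metis nat_neq_iff)
  qed
  then show ?thesis unfolding orbit_def by (simp add: card_image)
qed

abbreviation p :: "nat \<Rightarrow> nat" where "p \<nu> \<equiv> card {x \<in> Dn n. h x = \<nu>}"
abbreviation m :: nat where "m \<equiv> Max {\<nu> \<in> {1..n}. p \<nu> \<ge> 1}"

lemma occurring_heights: "{\<nu> \<in> {1..n}. p \<nu> \<ge> 1} = h ` Dn n"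
proof -
  have p_pos_iff: "p \<nu> \<ge> 1 \<longleftrightarrow> \<nu> \<in> h ` Dn n" for \<nu>
  proof -
    have "p \<nu> \<ge> 1 \<longleftrightarrow> {x \<in> Dn n. h x = \<nu>} \<noteq> {}"
      using finite_Dn by (simp add: Suc_le_eq card_gt_0_iff)
    then show ?thesis by blast
  qed
  show ?thesis
  proof (intro equalityI subsetI)
    fix \<nu> assume "\<nu> \<in> h ` Dn n"
    then show "\<nu> \<in> {\<nu> \<in> {1..n}. p \<nu> \<ge> 1}"
      using p_pos_iff height_ge_1 height_le by auto
  qed (use p_pos_iff in simp)
qed

lemma max_height_attained: "\<exists>x\<in>Dn n. m = h x"
proof -
  have "Dn n \<noteq> {}" using n_pos by (auto simp: Dn_def)
  then have "Max (h ` Dn n) \<in> h ` Dn n" using finite_Dn by simp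
  then show ?thesis unfolding occurring_heights by blast
qed

lemma height_le_m: "x \<in> Dn n \<Longrightarrow> h x \<le> m"
  unfolding occurring_heights using finite_Dn by simp

lemma m_bounds: "1 \<le> m" "m \<le> n"
proof -
  obtain x where x: "x \<in> Dn n" "m = h x" using max_height_attained by blast
  show "1 \<le> m" "m \<le> n" using height_ge_1[OF x(1)] height_le[OF x(1)] x(2) by linarith+
qed

lemma p_pos:
  assumes \<nu>: "\<nu> \<in> {1..m}" shows "1 \<le> p \<nu>"
proof -
  obtain x where x: "x \<in> Dn n" and hx: "m = h x" using max_height_attained by blast
  from \<nu> have \<nu>_bounds: "1 \<le> \<nu>" "\<nu> \<le> m" by (simp_all only: atLeastAtMost_iff)
  then have lt: "m - \<nu> < h x" using hx by linarith
  have "(L ^^ (m - \<nu>)) x \<in> Dn n"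
    using funpow_loc_in_Dn_iff[OF x, of "m - \<nu>"] lt by (simp only: simp_thms)
  moreover have "h ((L ^^ (m - \<nu>)) x) = \<nu>"
    using height_funpow[OF x lt] hx \<nu>_bounds by linarith
  ultimately have "\<nu> \<in> h ` Dn n" by (rule image_eqI[OF sym, rotated])
  then have "\<nu> \<in> {\<nu> \<in> {1..n}. p \<nu> \<ge> 1}" by (simp only: occurring_heights)
  then show ?thesis by (auto simp only: mem_Collect_eq)
qed

lemma card_height_le: "card {x \<in> Dn n. h x \<le> k} = (\<Sum>\<nu>=1..k. p \<nu>)"
proof (induction k)
  case 0
  have "{x \<in> Dn n. h x \<le> 0} = {}" using height_ge_1 by fastforce
  then show ?case by (simp only: card.empty) simp
next
  case (Suc k)
  have "{x \<in> Dn n. h x \<le> Suc k} = {x \<in> Dn n. h x \<le> k} \<union> {x \<in> Dn n. h x = Suc k}" by auto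
  then have "card {x \<in> Dn n. h x \<le> Suc k} = card {x \<in> Dn n. h x \<le> k} + p (Suc k)"
    using finite_Dn by (simp add: card_Un_disjoint disjoint_iff)
  then show ?case using Suc by simp
qed

lemma card_height_gt: "card {x \<in> Dn n. k < h x} = n - (\<Sum>\<nu>=1..k. p \<nu>)"
proof -
  have "Dn n = {x \<in> Dn n. h x \<le> k} \<union> {x \<in> Dn n. k < h x}" by auto
  then have "card (Dn n) = card {x \<in> Dn n. h x \<le> k} + card {x \<in> Dn n. k < h x}"
    using finite_Dn by (metis (no_types, lifting) card_Un_disjoint finite_Un disjoint_iff
      mem_Collect_eq not_less)
  then have "n = card {x \<in> Dn n. h x \<le> k} + card {x \<in> Dn n. k < h x}"
    using card_Dn by simp
  then show ?thesis using card_height_le by simp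
qed

lemma sum_p: "(\<Sum>\<nu>=1..m. p \<nu>) = n"
proof -
  have "{x \<in> Dn n. h x \<le> m} = Dn n" using height_le_m by auto
  then show ?thesis using card_height_le[of m] card_Dn by simp
qed

lemma sum_height: "(\<Sum>x\<in>Dn n. h x) = (\<Sum>\<nu>=1..m. \<nu> * p \<nu>)"
proof -
  have "h ` Dn n \<subseteq> {1..m}" using height_le_m height_ge_1 by auto
  then have "(\<Sum>x\<in>Dn n. h x) = (\<Sum>\<nu>=1..m. \<Sum>x\<in>{x \<in> Dn n. h x = \<nu>}. h x)"
    using sum.group[OF finite_Dn[of n], of "{1..m}" h h] by simp
  then show ?thesis by (simp add: mult.commute)
qed

lemma Mmat_pow: "Mmat \<phi> n ^\<^sub>m k = fun_mat n (L ^^ k)"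
  unfolding Mmat_eq_fun_mat using loc_le by (intro fun_mat_pow) auto

lemma funpow_loc_in_Dn_set: "{x \<in> Dn n. (L ^^ k) x \<in> Dn n} = {x \<in> Dn n. k < h x}"
  using funpow_loc_in_Dn_iff by blast

lemma Mmat_pow_eq_msum_Emat:
  "Mmat \<phi> n ^\<^sub>m k = msum n (\<lambda>x. Emat n ((L ^^ k) x) x) {x \<in> Dn n. (L ^^ k) x \<in> Dn n}"
  unfolding Mmat_pow by (rule fun_mat_eq_msum_Emat)

lemma nnz_Mmat_pow: "nnz (Mmat \<phi> n ^\<^sub>m k) = n - (\<Sum>\<nu>=1..k. p \<nu>)"
  unfolding Mmat_pow nnz_fun_mat funpow_loc_in_Dn_set by (rule card_height_gt)

lemma Mmat_nilpotent: "nilpotent_deg (Mmat \<phi> n) m"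
proof -
  obtain x where x: "x \<in> Dn n" and hx: "m = h x" using max_height_attained by blast
  have "(L ^^ (m - 1)) x \<in> Dn n"
    using funpow_loc_in_Dn_iff[OF x, of "m - 1"] hx m_bounds(1) by linarith
  then have "Mmat \<phi> n ^\<^sub>m (m - 1) \<noteq> 0\<^sub>m n n"
    unfolding Mmat_pow fun_mat_eq_zero_iff using x by blast
  moreover have "Mmat \<phi> n ^\<^sub>m m = 0\<^sub>m n n"
    unfolding Mmat_pow fun_mat_eq_zero_iff using funpow_loc_in_Dn_iff height_le_m by (simp add: not_less)
  ultimately show ?thesis
    unfolding nilpotent_deg_def Mmat_eq_fun_mat by simp
qed

definition Mhat_inv :: "int mat" where
  "Mhat_inv = msum n (\<lambda>k. Mmat \<phi> n ^\<^sub>m k) {..<m}"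

lemma Mhat_inv_carrier: "Mhat_inv \<in> carrier_mat n n"
  unfolding Mhat_inv_def Mmat_pow by (intro msum_carrier) auto

lemma Mhat_mult_inv: "Mhat \<phi> n * Mhat_inv = 1\<^sub>m n"
  and inv_mult_Mhat: "Mhat_inv * Mhat \<phi> n = 1\<^sub>m n"
proof -
  have M: "Mmat \<phi> n \<in> carrier_mat n n" by (simp add: Mmat_eq_fun_mat)
  have "1\<^sub>m n - Mmat \<phi> n ^\<^sub>m m = 1\<^sub>m n"
    using Mmat_nilpotent M unfolding nilpotent_deg_def by (intro eq_matI) auto
  then show "Mhat \<phi> n * Mhat_inv = 1\<^sub>m n" "Mhat_inv * Mhat \<phi> n = 1\<^sub>m n"
    using one_minus_mult_geometric_sum[OF M, of m] unfolding Mhat_def Mhat_inv_def by simp_all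
qed

lemma index_Mhat_inv:
  assumes r: "r < n" and c: "c < n"
  shows "Mhat_inv $$ (r, c) = (\<Sum>k<h (c + 1). of_bool ((L ^^ k) (c + 1) = r + 1))"
proof -
  have x: "c + 1 \<in> Dn n" using c by (simp add: Dn_def)
  have "Mhat_inv $$ (r, c) = (\<Sum>k<m. of_bool ((L ^^ k) (c + 1) = r + 1))"
    unfolding Mhat_inv_def using r c by (simp add: index_msum Mmat_pow)
  also have "\<dots> = (\<Sum>k<h (c + 1). of_bool ((L ^^ k) (c + 1) = r + 1))"
  proof (rule sum.mono_neutral_right)
    show "{..<h (c + 1)} \<subseteq> {..<m}" using height_le_m[OF x] by auto
    show "\<forall>k\<in>{..<m} - {..<h (c + 1)}. of_bool ((L ^^ k) (c + 1) = r + 1) = (0::int)"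
    proof
      fix k assume "k \<in> {..<m} - {..<h (c + 1)}"
      then have "(L ^^ k) (c + 1) = 0" using funpow_loc_eq_0_iff[OF x, of k] by simp
      then show "of_bool ((L ^^ k) (c + 1) = r + 1) = (0::int)" by simp
    qed
  qed simp
  finally show ?thesis .
qed

lemma Mhat_inv_nonzero_iff:
  assumes r: "r < n" and c: "c < n"
  shows "Mhat_inv $$ (r, c) \<noteq> 0 \<longleftrightarrow> r + 1 \<in> orbit (c + 1)"
proof -
  have "Mhat_inv $$ (r, c) \<noteq> 0 \<longleftrightarrow> (\<exists>k\<in>{..<h (c + 1)}. (L ^^ k) (c + 1) = r + 1)"
    unfolding index_Mhat_inv[OF r c] by (subst sum_nonneg_eq_0_iff) auto
  also have "\<dots> \<longleftrightarrow> r + 1 \<in> orbit (c + 1)"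
    unfolding orbit_def image_iff by (simp only: eq_commute)
  finally show ?thesis .
qed

lemma col_Mhat_inv:
  assumes j: "j \<in> Dn n"
  shows "col Mhat_inv (j - 1) = uvec n j + vsum n (\<lambda>\<nu>. uvec n ((L ^^ \<nu>) j)) {1..h j - 1}"
proof -
  have jn: "j - 1 < n" and j1: "j - 1 + 1 = j" using j by (auto simp: Dn_def)
  have vs: "vsum n (\<lambda>\<nu>. uvec n ((L ^^ \<nu>) j)) {1..h j - 1} \<in> carrier_vec n"
    unfolding vsum_def by (intro finsum_vec_closed) (auto simp: uvec_carrier)
  have steps: "{..<h j} = insert 0 {1..h j - 1}" using height_ge_1[OF j] by auto
  show ?thesis
  proof (rule eq_vecI)
    fix r assume "r < dim_vec (uvec n j + vsum n (\<lambda>\<nu>. uvec n ((L ^^ \<nu>) j)) {1..h j - 1})"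
    then have r: "r < n" using vs by simp
    have "col Mhat_inv (j - 1) $ r = (\<Sum>k<h j. of_bool ((L ^^ k) j = r + 1))"
      using Mhat_inv_carrier r jn index_Mhat_inv[OF r jn] by (simp only: j1) simp
    also have "\<dots> = (\<Sum>k\<in>insert 0 {1..h j - 1}. of_bool ((L ^^ k) j = r + 1))"
      by (simp only: steps)
    also have "\<dots> = uvec n j $ r + (\<Sum>\<nu>\<in>{1..h j - 1}. uvec n ((L ^^ \<nu>) j) $ r)"
      using r by (simp add: uvec_index)
    also have "\<dots> = (uvec n j + vsum n (\<lambda>\<nu>. uvec n ((L ^^ \<nu>) j)) {1..h j - 1}) $ r"
      using r vs unfolding vsum_def by (simp add: index_finsum_vec uvec_carrier)
    finally show "col Mhat_inv (j - 1) $ r = (uvec n j + vsum n (\<lambda>\<nu>. uvec n ((L ^^ \<nu>) j)) {1..h j - 1}) $ r" .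
  qed (use vs Mhat_inv_carrier in auto)
qed

lemma nnz_Mhat_inv: "nnz Mhat_inv = (\<Sum>x\<in>Dn n. h x)"
proof -
  let ?pos = "\<lambda>(x, y). (y - 1, x - 1)"
  have "{(r, c). r < n \<and> c < n \<and> Mhat_inv $$ (r, c) \<noteq> 0} = ?pos ` (SIGMA x:Dn n. orbit x)"
  proof (intro equalityI subsetI)
    fix rc assume "rc \<in> {(r, c). r < n \<and> c < n \<and> Mhat_inv $$ (r, c) \<noteq> 0}"
    then obtain r c where rc: "rc = (r, c)" "r < n" "c < n" "Mhat_inv $$ (r, c) \<noteq> 0" by blast
    then have "r + 1 \<in> orbit (c + 1)" using Mhat_inv_nonzero_iff by blast
    with rc show "rc \<in> ?pos ` (SIGMA x:Dn n. orbit x)"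
      by (intro image_eqI[of _ _ "(c + 1, r + 1)"] SigmaI) (simp_all add: Dn_def)
  next
    fix rc assume "rc \<in> ?pos ` (SIGMA x:Dn n. orbit x)"
    then obtain x y where rc: "rc = (y - 1, x - 1)" and x: "x \<in> Dn n" and y: "y \<in> orbit x" by auto
    then have "y \<in> Dn n" using orbit_subset by blast
    with x y have "y - 1 < n" "x - 1 < n" "y - 1 + 1 \<in> orbit (x - 1 + 1)" by (auto simp: Dn_def)
    then show "rc \<in> {(r, c). r < n \<and> c < n \<and> Mhat_inv $$ (r, c) \<noteq> 0}"
      using Mhat_inv_nonzero_iff rc by blast
  qed
  moreover have "inj_on ?pos (SIGMA x:Dn n. orbit x)"
  proof (rule inj_on_subset)
    show "inj_on ?pos (Dn n \<times> Dn n)" by (auto simp: inj_on_def Dn_def)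
    show "(SIGMA x:Dn n. orbit x) \<subseteq> Dn n \<times> Dn n" using orbit_subset by blast
  qed
  ultimately have "nnz Mhat_inv = card (SIGMA x:Dn n. orbit x)"
    unfolding nnz_def using Mhat_inv_carrier by (simp add: card_image)
  also have "\<dots> = (\<Sum>x\<in>Dn n. card (orbit x))"
    using finite_Dn by (intro card_SigmaI) (simp_all add: orbit_def)
  also have "\<dots> = (\<Sum>x\<in>Dn n. h x)"
    using card_orbit by simp
  finally show ?thesis .
qed

end

theorem theorem1p7:
  fixes \<phi> :: "nat \<Rightarrow> nat" and n :: nat
  assumes phi0: "\<phi> 0 = 0"
    and nofix: "\<forall>x\<ge>1. \<phi> x \<noteq> x"
    and n2: "n \<ge> 2"
    and nocyc: "no_cycle \<phi> n"
  defines "p \<equiv> (\<lambda>\<nu>. card {x \<in> Dn n. height \<phi> n x = \<nu>})"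
  defines "m \<equiv> Max {\<nu> \<in> {1..n}. p \<nu> \<ge> 1}"
  shows "1 \<le> m \<and> m \<le> n \<and> (\<forall>\<nu>\<in>{1..m}. p \<nu> \<ge> 1) \<and> (\<Sum>\<nu>=1..m. p \<nu>) = n
         \<and> nilpotent_deg (Mmat \<phi> n) m
         \<and> (\<forall>k\<in>{1..m}.
           Mmat \<phi> n ^\<^sub>m k
             = msum n (\<lambda>x. Emat n ((loc \<phi> n ^^ k) x) x) {x \<in> Dn n. (loc \<phi> n ^^ k) x \<in> Dn n}
         \<and> nnz (Mmat \<phi> n ^\<^sub>m k) = n - (\<Sum>\<nu>=1..k. p \<nu>))
         \<and> (\<exists>V \<in> carrier_mat n n. Mhat \<phi> n * V = 1\<^sub>m n \<and> V * Mhat \<phi> n = 1\<^sub>m n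
         \<and> (\<forall>j\<in>Dn n. col V (j - 1)
               = uvec n j + vsum n (\<lambda>\<nu>. uvec n ((loc \<phi> n ^^ \<nu>) j)) {1..height \<phi> n j - 1})
         \<and> nnz V = (\<Sum>x\<in>Dn n. height \<phi> n x)
         \<and> (\<Sum>x\<in>Dn n. height \<phi> n x) = (\<Sum>\<nu>=1..m. \<nu> * p \<nu>)
         \<and> (\<Sum>\<nu>=1..m. \<nu> * p \<nu>) \<le> n * m - (m choose 2))"
proof -
  interpret acyclic_loc \<phi> n
    using nofix nocyc n2 by unfold_locales auto
  show ?thesis
    unfolding p_def m_def
    by (intro conjI ballI bexI[OF _ Mhat_inv_carrier])
      (rule m_bounds p_pos sum_p Mmat_nilpotent Mmat_pow_eq_msum_Emat nnz_Mmat_pow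
        Mhat_mult_inv inv_mult_Mhat col_Mhat_inv nnz_Mhat_inv sum_height
        weighted_composition_sum_le[OF p_pos sum_p] | assumption)+
qed

end
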